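(* In the setting of the context, let $d\ge1$ be such that $\mathcal E_m\subset d\mathbb Z$ for every $m\ge1$. Then for every $j\ge1$ and all integers $\alpha,\beta$ with $P_j(\{\alpha\})>0$ and $P_j(\{\beta\})>0$, $\alpha-\beta$ is a multiple of $d$.
   Context: Let $\pi_m\ge2$ ($m\ge1$) be integers and $\eta_{m,i}\ge0$ ($m\ge1$, $0\le i\le\pi_m-1$) integers; write $\eta_m:i\mapsto\eta_{m,i}$. $\overline Y=\prod_{m\ge1}\{0,\dots,\pi_m-1\}$ with product uniform measure $\overline\nu$ and odometer $\overline S$ (add $1$ to the first coordinate with carry to the right). $\gamma(\overline y)=\sum_{m=1}^{\overline t(\overline y)}\eta_{m,\overline y_m}$ where $\overline t(\overline y)$ is the smallest $t\ge1$ with $\overline y_t<\pi_t-1$. $P_j$ is the distribution under $\overline\nu$ of $\gamma+\gamma\circ\overline S+\dots+\gamma\circ\overline S^{j-1}$. $\mathcal S_m=\eta_m(\{0,\dots,\pi_m-2\})\cup\big(\eta_{m,\pi_m-1}+\eta_{m+1}(\{0,\dots,\pi_{m+1}-2\})\big)$, $\mathcal E_m=\mathcal S_m-\mathcal S_m$. *)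

theory Defs
  imports "HOL-Probability.Probability"
begin

text \<open>Coordinates are indexed by m >= 1; points of Y are functions nat => nat
  (extensional on {1..}, i.e. value undefined at 0).\<close>

definition Ybar_measure :: "(nat \<Rightarrow> nat) \<Rightarrow> (nat \<Rightarrow> nat) measure" where
  "Ybar_measure \<pi> = (\<Pi>\<^sub>M m\<in>{1..}. measure_pmf (pmf_of_set {0..<\<pi> m}))"

definition odo_t :: "(nat \<Rightarrow> nat) \<Rightarrow> (nat \<Rightarrow> nat) \<Rightarrow> nat" where
  "odo_t \<pi> y = (LEAST t. 1 \<le> t \<and> y t < \<pi> t - 1)"

definition odometer :: "(nat \<Rightarrow> nat) \<Rightarrow> (nat \<Rightarrow> nat) \<Rightarrow> (nat \<Rightarrow> nat)" where
  "odometer \<pi> y = (\<lambda>m. if m = 0 then undefined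
                      else if m < odo_t \<pi> y then 0
                      else if m = odo_t \<pi> y then y m + 1
                      else y m)"

definition gamma :: "(nat \<Rightarrow> nat) \<Rightarrow> (nat \<Rightarrow> nat \<Rightarrow> nat) \<Rightarrow> (nat \<Rightarrow> nat) \<Rightarrow> int" where
  "gamma \<pi> \<eta> y = (\<Sum>m = 1..odo_t \<pi> y. int (\<eta> m (y m)))"

definition birkhoff_sum :: "(nat \<Rightarrow> nat) \<Rightarrow> (nat \<Rightarrow> nat \<Rightarrow> nat) \<Rightarrow> nat \<Rightarrow> (nat \<Rightarrow> nat) \<Rightarrow> int" where
  "birkhoff_sum \<pi> \<eta> j y = (\<Sum>i<j. gamma \<pi> \<eta> ((odometer \<pi> ^^ i) y))"

definition P_dist :: "(nat \<Rightarrow> nat) \<Rightarrow> (nat \<Rightarrow> nat \<Rightarrow> nat) \<Rightarrow> nat \<Rightarrow> int measure" where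
  "P_dist \<pi> \<eta> j = distr (Ybar_measure \<pi>) (count_space UNIV) (birkhoff_sum \<pi> \<eta> j)"

definition S_set :: "(nat \<Rightarrow> nat) \<Rightarrow> (nat \<Rightarrow> nat \<Rightarrow> nat) \<Rightarrow> nat \<Rightarrow> int set" where
  "S_set \<pi> \<eta> m = (\<lambda>i. int (\<eta> m i)) ` {0..\<pi> m - 2}
      \<union> (\<lambda>i. int (\<eta> m (\<pi> m - 1)) + int (\<eta> (m+1) i)) ` {0..\<pi> (m+1) - 2}"

definition E_set :: "(nat \<Rightarrow> nat) \<Rightarrow> (nat \<Rightarrow> nat \<Rightarrow> nat) \<Rightarrow> nat \<Rightarrow> int set" where
  "E_set \<pi> \<eta> m = {a - b | a b. a \<in> S_set \<pi> \<eta> m \<and> b \<in> S_set \<pi> \<eta> m}"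

end

theory Submission
  imports Defs
begin

text \<open>Because \<open>\<E>\<^sub>m \<subseteq> d\<int>\<close>, modulo \<open>d\<close> every non-top digit \<open>i\<close> of level \<open>m\<close> contributes
  \<open>\<eta>\<^sub>m(i) \<equiv> \<eta>\<^sub>m(0)\<close>, and a carry satisfies \<open>\<eta>\<^sub>m(\<pi>\<^sub>m-1) + \<eta>\<^bsub>m+1\<^esub>(0) \<equiv> \<eta>\<^sub>m(0)\<close>. Hence the sum defining
  \<open>\<gamma>(y)\<close> telescopes to \<open>\<gamma>(y) \<equiv> \<eta>\<^sub>1(0)\<close> whenever the carry of the odometer at \<open>y\<close> terminates, and
  then the Birkhoff sum of length \<open>j\<close> is \<open>\<equiv> j \<eta>\<^sub>1(0)\<close>. The points with terminating carries
  (and digits in range) are preserved by the odometer and have full measure, since a block of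
  \<open>k\<close> consecutive top digits has probability at most \<open>2\<^sup>-\<^sup>k\<close>. So every atom of \<open>P\<^sub>j\<close> lies in the
  single residue class \<open>j \<eta>\<^sub>1(0) + d\<int>\<close>.\<close>

definition odometer_admissible :: "(nat \<Rightarrow> nat) \<Rightarrow> (nat \<Rightarrow> nat) \<Rightarrow> bool" where
  "odometer_admissible \<pi> y \<longleftrightarrow> (\<forall>m\<ge>1. y m < \<pi> m) \<and> (\<forall>m0\<ge>1. \<exists>m\<ge>m0. y m < \<pi> m - 1)"

lemma odo_t_props:
  assumes "odometer_admissible \<pi> y"
  shows odo_t_ge_1: "1 \<le> odo_t \<pi> y"
    and odo_t_not_top: "y (odo_t \<pi> y) < \<pi> (odo_t \<pi> y) - 1"
    and top_below_odo_t: "\<And>m. 1 \<le> m \<Longrightarrow> m < odo_t \<pi> y \<Longrightarrow> y m = \<pi> m - 1"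
proof -
  obtain t where t: "1 \<le> t \<and> y t < \<pi> t - 1"
    using assms unfolding odometer_admissible_def by auto
  have "1 \<le> odo_t \<pi> y \<and> y (odo_t \<pi> y) < \<pi> (odo_t \<pi> y) - 1"
    unfolding odo_t_def by (rule LeastI[of _ t]) (use t in auto)
  then show "1 \<le> odo_t \<pi> y" "y (odo_t \<pi> y) < \<pi> (odo_t \<pi> y) - 1" by auto
  fix m assume m: "1 \<le> m" "m < odo_t \<pi> y"
  then have "\<not> y m < \<pi> m - 1"
    using not_less_Least[of m "\<lambda>t. 1 \<le> t \<and> y t < \<pi> t - 1"] unfolding odo_t_def by auto
  with m assms show "y m = \<pi> m - 1" unfolding odometer_admissible_def by force
qed

lemma odometer_admissible_odometer:
  assumes "odometer_admissible \<pi> y"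
  shows "odometer_admissible \<pi> (odometer \<pi> y)"
  unfolding odometer_admissible_def
proof (intro conjI allI impI)
  fix m :: nat assume "1 \<le> m"
  then show "odometer \<pi> y m < \<pi> m"
    using assms odo_t_not_top[OF assms] unfolding odometer_admissible_def odometer_def
    by auto
next
  fix m0 :: nat assume "1 \<le> m0"
  then obtain m where "m \<ge> max m0 (odo_t \<pi> y + 1)" "y m < \<pi> m - 1"
    using assms unfolding odometer_admissible_def by (meson le_add2 le_trans max.cobounded2)
  then show "\<exists>m\<ge>m0. odometer \<pi> y m < \<pi> m - 1"
    by (intro exI[of _ m]) (auto simp: odometer_def)
qed

lemma odometer_admissible_funpow:
  "odometer_admissible \<pi> y \<Longrightarrow> odometer_admissible \<pi> ((odometer \<pi> ^^ i) y)"
  by (induction i) (auto intro: odometer_admissible_odometer)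

context
  fixes \<pi> :: "nat \<Rightarrow> nat" and \<eta> :: "nat \<Rightarrow> nat \<Rightarrow> nat" and d :: int
  assumes E_sub: "\<And>m. m \<ge> 1 \<Longrightarrow> E_set \<pi> \<eta> m \<subseteq> {k * d | k. True}"
begin

lemma S_set_dvd_diff:
  assumes "m \<ge> 1" "a \<in> S_set \<pi> \<eta> m" "b \<in> S_set \<pi> \<eta> m"
  shows "d dvd (a - b)"
proof -
  have "a - b \<in> E_set \<pi> \<eta> m" using assms unfolding E_set_def by blast
  then show ?thesis using E_sub[OF assms(1)] by (auto simp: mult.commute)
qed

lemma eta_dvd_diff_zero:
  "m \<ge> 1 \<Longrightarrow> i \<le> \<pi> m - 2 \<Longrightarrow> d dvd (int (\<eta> m i) - int (\<eta> m 0))"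
  by (rule S_set_dvd_diff) (auto simp: S_set_def)

lemma eta_carry_dvd:
  "m \<ge> 1 \<Longrightarrow> d dvd (int (\<eta> m (\<pi> m - 1)) + int (\<eta> (m+1) 0) - int (\<eta> m 0))"
  by (rule S_set_dvd_diff) (auto simp: S_set_def)

lemma top_prefix_sum_dvd:
  "d dvd ((\<Sum>m=1..n. int (\<eta> m (\<pi> m - 1))) + int (\<eta> (n+1) 0) - int (\<eta> 1 0))"
proof (induction n)
  case 0
  then show ?case by simp
next
  case (Suc n)
  have split: "(\<Sum>m=1..Suc n. int (\<eta> m (\<pi> m - 1))) + int (\<eta> (Suc n + 1) 0) - int (\<eta> 1 0)
      = ((\<Sum>m=1..n. int (\<eta> m (\<pi> m - 1))) + int (\<eta> (n+1) 0) - int (\<eta> 1 0))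
        + (int (\<eta> (n+1) (\<pi> (n+1) - 1)) + int (\<eta> (n+1+1) 0) - int (\<eta> (n+1) 0))"
    by simp
  show ?case unfolding split by (rule dvd_add[OF Suc.IH eta_carry_dvd]) simp
qed

lemma gamma_dvd:
  assumes y: "odometer_admissible \<pi> y"
  shows "d dvd (gamma \<pi> \<eta> y - int (\<eta> 1 0))"
proof -
  define t where "t = odo_t \<pi> y"
  have t: "t \<ge> 1" "y t \<le> \<pi> t - 2"
    using odo_t_ge_1[OF y] odo_t_not_top[OF y] by (auto simp: t_def)
  have "gamma \<pi> \<eta> y = (\<Sum>m=1..t-1. int (\<eta> m (y m))) + int (\<eta> t (y t))"
  proof -
    have "{1..t} = insert t {1..t-1}" using t(1) by auto
    then show ?thesis using t(1) by (simp add: gamma_def t_def[symmetric] add.commute)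
  qed
  also have "(\<Sum>m=1..t-1. int (\<eta> m (y m))) = (\<Sum>m=1..t-1. int (\<eta> m (\<pi> m - 1)))"
    using top_below_odo_t[OF y] by (intro sum.cong) (auto simp: t_def)
  finally have split: "gamma \<pi> \<eta> y - int (\<eta> 1 0) =
     ((\<Sum>m=1..t-1. int (\<eta> m (\<pi> m - 1))) + int (\<eta> (t-1+1) 0) - int (\<eta> 1 0))
     + (int (\<eta> t (y t)) - int (\<eta> t 0))" using t(1) by simp
  show ?thesis unfolding split by (rule dvd_add[OF top_prefix_sum_dvd eta_dvd_diff_zero[OF t]])
qed

lemma birkhoff_sum_dvd:
  assumes "odometer_admissible \<pi> y"
  shows "d dvd (birkhoff_sum \<pi> \<eta> j y - int j * int (\<eta> 1 0))"
proof -
  have "birkhoff_sum \<pi> \<eta> j y - int j * int (\<eta> 1 0)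
      = (\<Sum>i<j. gamma \<pi> \<eta> ((odometer \<pi> ^^ i) y) - int (\<eta> 1 0))"
    by (simp add: birkhoff_sum_def sum_subtractf)
  also have "d dvd \<dots>"
    using assms by (intro dvd_sum gamma_dvd odometer_admissible_funpow)
  finally show ?thesis .
qed

end

lemma prob_space_Ybar_measure: "prob_space (Ybar_measure \<pi>)"
  unfolding Ybar_measure_def by (intro prob_space_PiM prob_space_measure_pmf)

lemma AE_Ybar_measure_coordinate_less:
  assumes "m \<ge> 1" "\<pi> m > 0"
  shows "AE y in Ybar_measure \<pi>. y m < \<pi> m"
  unfolding Ybar_measure_def
  by (rule AE_PiM_component) (use assms in \<open>auto simp: prob_space_measure_pmf AE_measure_pmf_iff\<close>)

lemma Ybar_measure_cylinder_eq:
  assumes "J \<subseteq> {1..}"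
  shows "{y \<in> space (Ybar_measure \<pi>). \<forall>m\<in>J. y m = c m}
       = prod_emb {1..} (\<lambda>m. measure_pmf (pmf_of_set {0..<\<pi> m})) J (\<Pi>\<^sub>E m\<in>J. {c m})"
  using assms by (auto simp: Ybar_measure_def prod_emb_def space_PiM PiE_iff extensional_def)

lemma measure_Ybar_measure_top_block:
  assumes pi_ge: "\<And>m. m \<ge> 1 \<Longrightarrow> \<pi> m \<ge> 2" and "m0 \<ge> 1"
  shows "measure (Ybar_measure \<pi>) {y \<in> space (Ybar_measure \<pi>). \<forall>m\<in>{m0..<m0+k}. y m = \<pi> m - 1}
           \<le> (1/2)^k"
proof -
  let ?J = "{m0..<m0+k}"
  have J: "?J \<subseteq> {1..}" using \<open>m0 \<ge> 1\<close> by auto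
  have single: "measure (measure_pmf (pmf_of_set {0..<\<pi> m})) {\<pi> m - 1} = 1 / \<pi> m" if "m \<in> ?J" for m
  proof -
    have "{0..<\<pi> m} \<inter> {\<pi> m - 1} = {\<pi> m - 1}" using pi_ge[of m] that J by auto
    then show ?thesis using pi_ge[of m] that J by (subst measure_pmf_of_set) auto
  qed
  have "emeasure (Ybar_measure \<pi>) {y \<in> space (Ybar_measure \<pi>). \<forall>m\<in>?J. y m = \<pi> m - 1}
      = (\<Prod>m\<in>?J. emeasure (measure_pmf (pmf_of_set {0..<\<pi> m})) {\<pi> m - 1})"
    unfolding Ybar_measure_cylinder_eq[OF J]
    using J by (simp add: Ybar_measure_def emeasure_PiM_emb prob_space_measure_pmf)
  also have "\<dots> = (\<Prod>m\<in>?J. ennreal (1 / real (\<pi> m)))"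
    by (intro prod.cong refl) (use single in \<open>simp add: measure_pmf.emeasure_eq_measure\<close>)
  also have "\<dots> = ennreal (\<Prod>m\<in>?J. 1 / real (\<pi> m))"
    by (simp add: prod_ennreal)
  finally have "measure (Ybar_measure \<pi>) {y \<in> space (Ybar_measure \<pi>). \<forall>m\<in>?J. y m = \<pi> m - 1}
      = (\<Prod>m\<in>?J. 1 / real (\<pi> m))"
    by (intro measure_eq_emeasure_eq_ennreal) (auto intro: prod_nonneg)
  also have "\<dots> \<le> (\<Prod>m\<in>?J. 1/2)"
  proof (intro prod_mono conjI)
    fix m assume "m \<in> ?J"
    then have "real (\<pi> m) \<ge> 2" using pi_ge[of m] J by auto
    then show "1 / real (\<pi> m) \<le> 1/2" by (simp add: field_simps)
  qed simp
  finally show ?thesis by simp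
qed

lemma AE_Ybar_measure_not_eventually_top:
  assumes pi_ge: "\<And>m. m \<ge> 1 \<Longrightarrow> \<pi> m \<ge> 2" and "m0 \<ge> 1"
  shows "AE y in Ybar_measure \<pi>. \<exists>m\<ge>m0. y m \<noteq> \<pi> m - 1"
proof (rule AE_I')
  let ?M = "Ybar_measure \<pi>"
  define B where "B k = {y \<in> space ?M. \<forall>m\<in>{m0..<m0+k}. y m = \<pi> m - 1}" for k
  have B_sets: "B k \<in> sets ?M" for k
    unfolding B_def using \<open>m0 \<ge> 1\<close>
    by (subst Ybar_measure_cylinder_eq) (auto simp: Ybar_measure_def intro!: sets_PiM_I)
  interpret prob_space ?M by (rule prob_space_Ybar_measure)
  have "measure ?M (\<Inter>k. B k) \<le> (1/2)^k" for k
    using finite_measure_mono[of "\<Inter>k. B k" "B k"] B_sets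
      measure_Ybar_measure_top_block[OF pi_ge \<open>m0 \<ge> 1\<close>, where k=k]
    by (fastforce simp: B_def)
  then have "measure ?M (\<Inter>k. B k) \<le> 0"
    by (intro LIMSEQ_le_const[OF LIMSEQ_power_zero]) auto
  then show "(\<Inter>k. B k) \<in> null_sets ?M"
    using B_sets by (auto simp: emeasure_eq_measure null_sets_def measure_le_0_iff)
  show "{y \<in> space ?M. \<not> (\<exists>m\<ge>m0. y m \<noteq> \<pi> m - 1)} \<subseteq> (\<Inter>k. B k)"
    by (auto simp: B_def)
qed

lemma AE_Ybar_measure_odometer_admissible:
  assumes pi_ge: "\<And>m. m \<ge> 1 \<Longrightarrow> \<pi> m \<ge> 2"
  shows "AE y in Ybar_measure \<pi>. odometer_admissible \<pi> y"
proof -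
  have "AE y in Ybar_measure \<pi>. \<forall>m. m \<ge> 1 \<longrightarrow> y m < \<pi> m"
    unfolding AE_all_countable
  proof (intro allI AE_impI)
    fix m :: nat assume "m \<ge> 1"
    with pi_ge[OF this] show "AE y in Ybar_measure \<pi>. y m < \<pi> m"
      by (intro AE_Ybar_measure_coordinate_less) auto
  qed
  moreover have "AE y in Ybar_measure \<pi>. \<forall>m0. m0 \<ge> 1 \<longrightarrow> (\<exists>m\<ge>m0. y m \<noteq> \<pi> m - 1)"
    unfolding AE_all_countable
    by (intro allI AE_impI AE_Ybar_measure_not_eventually_top[OF pi_ge])
  ultimately show ?thesis
  proof eventually_elim
    case (elim y)
    have "\<exists>m\<ge>m0. y m < \<pi> m - 1" if "m0 \<ge> 1" for m0
    proof -
      obtain m where "m \<ge> m0" "y m \<noteq> \<pi> m - 1" using elim(2) \<open>m0 \<ge> 1\<close> by blast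
      moreover have "y m < \<pi> m" using elim(1) \<open>m \<ge> m0\<close> \<open>m0 \<ge> 1\<close> by simp
      ultimately show ?thesis by (intro exI[of _ m]) auto
    qed
    with elim(1) show ?case unfolding odometer_admissible_def by blast
  qed
qed

lemma AE_witness_of_measure_distr_singleton_pos:
  assumes "measure (distr M (count_space UNIV) f) {a} > 0" and "AE x in M. P x"
  shows "\<exists>x\<in>space M. P x \<and> f x = a"
proof (rule ccontr)
  assume no_witness: "\<not> ?thesis"
  obtain N where N: "N \<in> null_sets M" "{x \<in> space M. \<not> P x} \<subseteq> N"
    using assms(2) unfolding eventually_ae_filter by auto
  have "emeasure M (f -` {a} \<inter> space M) = 0"
  proof (cases "f -` {a} \<inter> space M \<in> sets M")
    case True
    have "f -` {a} \<inter> space M \<subseteq> N" using N(2) no_witness by blast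
    with N(1) True show ?thesis by (auto intro: emeasure_eq_0)
  qed (rule emeasure_notin_sets)
  then have "measure (distr M (count_space UNIV) f) {a} = 0"
    by (simp add: distr_def emeasure_measure_of_conv measure_def)
  with assms(1) show False by simp
qed

theorem mainTheorem17:
  fixes \<pi> :: "nat \<Rightarrow> nat" and \<eta> :: "nat \<Rightarrow> nat \<Rightarrow> nat" and d :: int
  assumes pi_ge: "\<And>m. m \<ge> 1 \<Longrightarrow> \<pi> m \<ge> 2"
    and d_ge: "d \<ge> 1"
    and E_sub: "\<And>m. m \<ge> 1 \<Longrightarrow> E_set \<pi> \<eta> m \<subseteq> {k * d | k. True}"
  shows "\<forall>j \<ge> 1. \<forall>\<alpha> \<beta> :: int.
           measure (P_dist \<pi> \<eta> j) {\<alpha>} > 0 \<and> measure (P_dist \<pi> \<eta> j) {\<beta>} > 0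
           \<longrightarrow> d dvd (\<alpha> - \<beta>)"
proof (intro allI impI)
  fix j :: nat and \<alpha> \<beta> :: int
  assume pos: "measure (P_dist \<pi> \<eta> j) {\<alpha>} > 0 \<and> measure (P_dist \<pi> \<eta> j) {\<beta>} > 0"
  have value_dvd: "d dvd (a - int j * int (\<eta> 1 0))" if a: "measure (P_dist \<pi> \<eta> j) {a} > 0" for a
  proof -
    obtain y where "odometer_admissible \<pi> y" "birkhoff_sum \<pi> \<eta> j y = a"
      using AE_witness_of_measure_distr_singleton_pos[OF a[unfolded P_dist_def]
              AE_Ybar_measure_odometer_admissible[OF pi_ge]] by blast
    then show ?thesis using birkhoff_sum_dvd[OF E_sub, of y j] by simp
  qed
  have "d dvd ((\<alpha> - int j * int (\<eta> 1 0)) - (\<beta> - int j * int (\<eta> 1 0)))"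
    using pos by (intro dvd_diff value_dvd) (simp_all only:)
  then show "d dvd (\<alpha> - \<beta>)" by simp
qed

end
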